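(* Let $E$ be a finite-dimensional normed real vector space with its Borel $\sigma$-algebra, and $\mu$ a Lebesgue measure on $E$. Let $s\subseteq E$ be Borel-measurable, $f:E\to E$ injective on $s$, and for each $x\in E$ let $f'(x):E\to E$ be a continuous linear map that, for every $x\in s$, is a derivative of $f$ at $x$ along $s$. Then the function $x\mapsto|\det f'(x)|$ agrees $\mu$-almost everywhere on $s$ with a Borel-measurable function, and $$\mu(f(s))=\int_s |\det f'(x)|\,d\mu(x)$$ (as an equality in $[0,\infty]$, the right side being the lower Lebesgue integral of the nonnegative function).
   Context: A Lebesgue measure on a finite-dimensional real normed vector space $E$ is a Borel measure that is invariant under translations, finite on compact sets, and positive on nonempty open sets. A continuous linear map $A:E\to E$ is a derivative of $f$ at $x$ along a set $s$ if $f(y)=f(x)+A(y-x)+o(\|y-x\|)$ as $y\to x$ with $y\in s$. *)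

theory Defs
  imports "HOL-Analysis.Analysis"
begin

definition fin_dim_space :: "'a::real_vector itself \<Rightarrow> bool" where
  "fin_dim_space _ \<longleftrightarrow> (\<exists>B. finite B \<and> span B = (UNIV :: 'a set))"

definition is_lebesgue_measure :: "'a::real_normed_vector measure \<Rightarrow> bool" where
  "is_lebesgue_measure M \<longleftrightarrow>
     sets M = sets borel \<and>
     (\<forall>a A. A \<in> sets borel \<longrightarrow> emeasure M ((\<lambda>x. a + x) ` A) = emeasure M A) \<and>
     (\<forall>K. compact K \<longrightarrow> emeasure M K < \<infinity>) \<and>
     (\<forall>U. open U \<and> U \<noteq> {} \<longrightarrow> 0 < emeasure M U)"

definition lin_det :: "('a::real_vector \<Rightarrow> 'a) \<Rightarrow> real" where
  "lin_det f = (let B = (SOME B. independent B \<and> span B = (UNIV :: 'a set)) in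
     \<Sum>p\<in>{p. p permutes B}. of_int (sign p) * (\<Prod>b\<in>B. representation B (f b) (p b)))"

end

theory Submission
  imports Defs
begin

text \<open>A basis of \<open>E\<close> identifies \<open>E\<close> linearly and homeomorphically with \<open>\<real>\<^sup>n\<close>. The
  push-forward of \<open>\<mu>\<close> along the coordinate map is again a translation-invariant Borel measure that
  is finite on compacts, and a Fubini argument (\<open>\<nu>(A)\<lambda>(B) = \<nu>(B)\<lambda>(A)\<close>) shows that it is a
  constant multiple \<open>c\<close> of Lebesgue measure \<open>\<lambda>\<close>. In coordinates \<open>f\<close> becomes a map of \<open>\<real>\<^sup>n\<close>
  whose Jacobian determinant is \<open>lin_det (f' x)\<close>, so the change-of-variables formula for \<open>\<lambda>\<close>
  multiplied by \<open>c\<close> gives the formula for \<open>\<mu>\<close>.\<close>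

section \<open>Translation-invariant measures on Euclidean space\<close>

lemma distr_plus_eq_if_translation_invariant:
  fixes M :: "'b::euclidean_space measure"
  assumes sets: "sets M = sets borel"
    and inv: "\<And>a A. A \<in> sets borel \<Longrightarrow> emeasure M ((\<lambda>x. a + x) ` A) = emeasure M A"
  shows "distr M borel (\<lambda>x. x + c) = M"
proof (rule measure_eqI)
  show "sets (distr M borel (\<lambda>x. x + c)) = sets M" using sets by simp
  fix A assume "A \<in> sets (distr M borel (\<lambda>x. x + c))"
  then have A: "A \<in> sets borel" by simp
  have meas: "(\<lambda>x. x + c) \<in> M \<rightarrow>\<^sub>M borel"
    by (subst measurable_cong_sets[OF sets refl]) simp
  have "(\<lambda>x. x + c) -` A \<inter> space M = (\<lambda>x. (-c) + x) ` A"
    using sets_eq_imp_space_eq[OF sets] by (auto simp: image_iff intro!: bexI[of _ "_ + c"])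
  then show "emeasure (distr M borel (\<lambda>x. x + c)) A = emeasure M A"
    using emeasure_distr[OF meas A] inv[OF A, of "-c"] by (simp del: uminus_add_conv_diff)
qed

lemma sigma_finite_measure_if_finite_on_compact:
  fixes M :: "'b::euclidean_space measure"
  assumes sets: "sets M = sets borel"
    and fin: "\<And>K. compact K \<Longrightarrow> emeasure M K < \<infinity>"
  shows "sigma_finite_measure M"
proof
  have "\<Union> (range (\<lambda>n::nat. cball (0::'b) (real n))) = space M"
    using sets_eq_imp_space_eq[OF sets] by (auto simp: real_arch_simple)
  moreover have "emeasure M (cball 0 (real n)) \<noteq> \<infinity>" for n
    using fin[OF compact_cball, of 0 "real n"] by (simp add: less_top[symmetric])
  ultimately show "\<exists>A. countable A \<and> A \<subseteq> sets M \<and> \<Union> A = space M \<and> (\<forall>a\<in>A. emeasure M a \<noteq> \<infinity>)"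
    using sets by (intro exI[of _ "range (\<lambda>n::nat. cball (0::'b) (real n))"]) auto
qed

lemma nn_integral_lborel_indicator_plus:
  fixes B :: "'b::euclidean_space set"
  assumes "B \<in> sets borel"
  shows "(\<integral>\<^sup>+y. indicator B (x + y) \<partial>lborel) = emeasure lborel B"
proof -
  have "(\<integral>\<^sup>+y. indicator B (x + y) \<partial>lborel) = (\<integral>\<^sup>+y. indicator B y \<partial>distr lborel borel ((+) x))"
    using assms by (subst nn_integral_distr) auto
  then show ?thesis using assms by (simp add: lborel_distr_plus)
qed

lemma nn_integral_lborel_indicator_minus:
  fixes A :: "'b::euclidean_space set"
  assumes "A \<in> sets borel"
  shows "(\<integral>\<^sup>+y. indicator A (x - y) \<partial>lborel) = emeasure lborel A"
proof -
  have "lborel = density (distr lborel borel (\<lambda>y. x + (-1::real) *\<^sub>R y)) (\<lambda>_. \<bar>-1::real\<bar>^DIM('b))"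
    by (rule lborel_affine) simp
  then have reflect: "distr lborel borel (\<lambda>y. x - y) = (lborel :: 'b measure)"
    by (simp add: density_1)
  have "(\<integral>\<^sup>+y. indicator A (x - y) \<partial>lborel) = (\<integral>\<^sup>+y. indicator A y \<partial>distr lborel borel (\<lambda>y. x - y))"
    using assms by (subst nn_integral_distr) auto
  then show ?thesis using assms reflect by simp
qed

lemma translation_invariant_measure_ratio:
  fixes M :: "'b::euclidean_space measure"
  assumes sets: "sets M = sets borel"
    and inv: "\<And>a A. A \<in> sets borel \<Longrightarrow> emeasure M ((\<lambda>x. a + x) ` A) = emeasure M A"
    and fin: "\<And>K. compact K \<Longrightarrow> emeasure M K < \<infinity>"
    and A: "A \<in> sets borel" and B: "B \<in> sets borel"
  shows "emeasure M A * emeasure lborel B = emeasure M B * emeasure lborel A"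
  \<comment> \<open>Both sides are \<open>\<integral>\<integral> 1\<^sub>A(x) 1\<^sub>B(x + y) dM(x) d\<lambda>(y)\<close>: integrate first in \<open>y\<close> using
    translation invariance of \<open>\<lambda>\<close>, or substitute \<open>x \<mapsto> x - y\<close> in \<open>M\<close>, swap the integrals and
    then integrate in \<open>y\<close> using reflection invariance of \<open>\<lambda>\<close>.\<close>
proof -
  interpret M: sigma_finite_measure M by (rule sigma_finite_measure_if_finite_on_compact[OF sets fin])
  interpret pair_sigma_finite M lborel by unfold_locales
  interpret lborel_M: pair_sigma_finite lborel M by unfold_locales
  have M_meas: "h \<in> borel_measurable M" if "h \<in> borel_measurable borel" for h :: "'b \<Rightarrow> ennreal"
    using that by (simp add: measurable_cong_sets[OF sets refl])
  have [measurable_cong]: "sets (M \<Otimes>\<^sub>M lborel) = sets (borel \<Otimes>\<^sub>M borel)"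
    "sets (lborel \<Otimes>\<^sub>M M) = sets (borel \<Otimes>\<^sub>M borel)"
    using sets by (auto intro!: sets_pair_measure_cong)
  note [measurable] = A B
  have meas_1: "(\<lambda>(x,y). indicator A x * indicator B (x + y) :: ennreal) \<in> borel_measurable (M \<Otimes>\<^sub>M lborel)"
    and meas_2: "(\<lambda>(y,x). indicator A (x - y) * indicator B x :: ennreal) \<in> borel_measurable (lborel \<Otimes>\<^sub>M M)"
    by measurable
  have shift: "(\<integral>\<^sup>+x. indicator A x * indicator B (x + y) \<partial>M) = (\<integral>\<^sup>+x. indicator A (x - y) * indicator B x \<partial>M)"
    for y
  proof -
    have "(\<integral>\<^sup>+x. indicator A (x - y) * indicator B x \<partial>M)
       = (\<integral>\<^sup>+x. indicator A (x - y) * indicator B x \<partial>distr M borel (\<lambda>x. x + y))"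
      by (simp add: distr_plus_eq_if_translation_invariant[OF sets inv])
    also have "\<dots> = (\<integral>\<^sup>+x. indicator A x * indicator B (x + y) \<partial>M)"
      by (subst nn_integral_distr) (auto simp: measurable_cong_sets[OF sets refl] add.commute)
    finally show ?thesis by simp
  qed
  have "emeasure M A * emeasure lborel B = (\<integral>\<^sup>+x. (\<integral>\<^sup>+y. indicator A x * indicator B (x + y) \<partial>lborel) \<partial>M)"
    using A sets by (simp add: nn_integral_cmult nn_integral_lborel_indicator_plus[OF B] nn_integral_multc M_meas)
  also have "\<dots> = (\<integral>\<^sup>+y. (\<integral>\<^sup>+x. indicator A x * indicator B (x + y) \<partial>M) \<partial>lborel)"
    using Fubini'[of "\<lambda>x y. indicator A x * indicator B (x + y)"] meas_1 by simp
  also have "\<dots> = (\<integral>\<^sup>+y. (\<integral>\<^sup>+x. indicator A (x - y) * indicator B x \<partial>M) \<partial>lborel)"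
    by (simp only: shift)
  also have "\<dots> = (\<integral>\<^sup>+x. (\<integral>\<^sup>+y. indicator A (x - y) * indicator B x \<partial>lborel) \<partial>M)"
    using lborel_M.Fubini'[of "\<lambda>y x. indicator A (x - y) * indicator B x"] meas_2 by simp
  also have "\<dots> = emeasure M B * emeasure lborel A"
    using B sets
    by (simp add: nn_integral_multc nn_integral_lborel_indicator_minus[OF A] mult.commute[of _ "emeasure lborel A"]
        nn_integral_cmult_indicator)
  finally show ?thesis .
qed

lemma translation_invariant_measure_eq_density_lborel:
  fixes M :: "'b::euclidean_space measure"
  assumes sets: "sets M = sets borel"
    and inv: "\<And>a A. A \<in> sets borel \<Longrightarrow> emeasure M ((\<lambda>x. a + x) ` A) = emeasure M A"
    and fin: "\<And>K. compact K \<Longrightarrow> emeasure M K < \<infinity>"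
  shows "M = density lborel (\<lambda>_. emeasure M (cbox 0 One))"
proof (rule measure_eqI)
  fix A assume "A \<in> sets M"
  then have "emeasure M A = emeasure M (cbox 0 One) * emeasure lborel A"
    using translation_invariant_measure_ratio[OF sets inv fin, of A "cbox 0 One"] sets
    by (simp add: emeasure_lborel_cbox_eq)
  then show "emeasure M A = emeasure (density lborel (\<lambda>_. emeasure M (cbox 0 One))) A"
    using \<open>A \<in> sets M\<close> sets by (simp add: emeasure_density nn_integral_cmult_indicator)
qed (simp add: sets)

section \<open>Coordinates with respect to a finite basis\<close>

definition det_wrt :: "'a::real_vector set \<Rightarrow> ('a \<Rightarrow> 'a) \<Rightarrow> real" where
  "det_wrt B f = (\<Sum>p\<in>{p. p permutes B}. of_int (sign p) * (\<Prod>b\<in>B. representation B (f b) (p b)))"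

definition chosen_basis :: "'a::real_vector set" where
  "chosen_basis = (SOME B. independent B \<and> span B = (UNIV :: 'a set))"

lemma lin_det_eq_det_wrt: "lin_det f = det_wrt chosen_basis f"
  by (simp add: lin_det_def det_wrt_def chosen_basis_def Let_def)

lemma chosen_basis: "independent (chosen_basis :: 'a::real_vector set)" "span (chosen_basis :: 'a set) = UNIV"
proof -
  obtain B :: "'a set" where "independent B" "UNIV \<subseteq> span B"
    using real_vector.basis_exists[of UNIV] by blast
  then have "\<exists>B::'a set. independent B \<and> span B = UNIV" by auto
  then show "independent (chosen_basis :: 'a set)" "span (chosen_basis :: 'a set) = UNIV"
    unfolding chosen_basis_def by (metis (mono_tags, lifting) someI_ex)+
qed

lemma finite_chosen_basis:
  assumes "fin_dim_space TYPE('a::real_vector)"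
  shows "finite (chosen_basis :: 'a set)"
proof -
  obtain T :: "'a set" where "finite T" "span T = UNIV"
    using assms unfolding fin_dim_space_def by blast
  then show ?thesis
    using real_vector.independent_span_bound[of T chosen_basis] chosen_basis by auto
qed

text \<open>Types are nonempty, hence the \<open>max 1\<close>: in the zero-dimensional case this type does not
  enumerate the (empty) basis, and that case is treated directly.
  The well-order is required by the change-of-variables theorem of \<open>HOL-Analysis\<close>.\<close>

typedef (overloaded) ('a::real_vector) basis_index = "{..< max 1 (card (chosen_basis :: 'a set))}"
  by (rule exI[of _ 0]) auto

instantiation basis_index :: (real_vector) linorder
begin
definition less_eq_basis_index :: "'a basis_index \<Rightarrow> 'a basis_index \<Rightarrow> bool"
  where "less_eq_basis_index i j \<longleftrightarrow> Rep_basis_index i \<le> Rep_basis_index j"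
definition less_basis_index :: "'a basis_index \<Rightarrow> 'a basis_index \<Rightarrow> bool"
  where "less_basis_index i j \<longleftrightarrow> Rep_basis_index i < Rep_basis_index j"
instance
  by standard (auto simp: less_eq_basis_index_def less_basis_index_def Rep_basis_index_inject)
end

instance basis_index :: (real_vector) wellorder
proof
  fix P :: "'a basis_index \<Rightarrow> bool" and i
  assume step: "\<And>i. (\<And>j. j < i \<Longrightarrow> P j) \<Longrightarrow> P i"
  show "P i"
    by (induct i rule: measure_induct_rule[of Rep_basis_index]) (rule step, simp add: less_basis_index_def)
qed

instance basis_index :: (real_vector) finite
proof
  have "(UNIV :: 'a basis_index set) = Abs_basis_index ` {..< max 1 (card (chosen_basis :: 'a set))}"
    using type_definition.Abs_image[OF type_definition_basis_index] by metis
  then show "finite (UNIV :: 'a basis_index set)" by (metis finite_imageI finite_lessThan)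
qed

lemma card_basis_index: "CARD('a::real_vector basis_index) = max 1 (card (chosen_basis :: 'a set))"
  using type_definition.card[OF type_definition_basis_index] by simp

locale indexed_basis =
  fixes B :: "'a::real_normed_vector set" and e :: "'n::finite \<Rightarrow> 'a"
  assumes independent_B: "independent B" and span_B: "span B = UNIV"
    and bij_e: "bij_betw e UNIV B"
begin

definition from_coords :: "real^'n \<Rightarrow> 'a" where
  "from_coords x = (\<Sum>k\<in>UNIV. (x $ k) *\<^sub>R e k)"

definition coords :: "'a \<Rightarrow> real^'n" where
  "coords v = (\<chi> i. representation B v (e i))"

definition in_coords :: "('a \<Rightarrow> 'a) \<Rightarrow> real^'n \<Rightarrow> real^'n" where
  "in_coords f v = coords (f (from_coords v))"

lemma finite_B: "finite B"
  using bij_betw_finite[OF bij_e] by simp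

lemma e_in_B [simp]: "e i \<in> B"
  using bij_e by (auto simp: bij_betw_def)

lemma e_eq_iff [simp]: "e i = e j \<longleftrightarrow> i = j"
  using bij_e by (auto simp: bij_betw_def inj_on_def)

lemma coords_from_coords [simp]: "coords (from_coords x) = x"
proof -
  have "representation B (from_coords x) (e j) = x $ j" for j
  proof -
    have "representation B (from_coords x) (e j) = (\<Sum>k\<in>UNIV. x $ k * representation B (e k) (e j))"
      by (simp add: from_coords_def real_vector.representation_sum[OF independent_B]
          real_vector.representation_scale[OF independent_B] span_B)
    also have "\<dots> = x $ j"
      by (simp add: real_vector.representation_basis[OF independent_B] if_distrib cong: if_cong)
    finally show ?thesis .
  qed
  then show ?thesis by (simp add: coords_def vec_eq_iff)
qed

lemma from_coords_coords [simp]: "from_coords (coords v) = v"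
proof -
  have "from_coords (coords v) = (\<Sum>b\<in>B. representation B v b *\<^sub>R b)"
    using sum.reindex_bij_betw[OF bij_e, of "\<lambda>b. representation B v b *\<^sub>R b"]
    by (simp add: from_coords_def coords_def)
  also have "\<dots> = v"
    using span_B by (intro real_vector.sum_representation_eq[OF independent_B _ finite_B]) auto
  finally show ?thesis .
qed

lemma bounded_linear_from_coords: "bounded_linear from_coords"
  unfolding from_coords_def
  by (intro bounded_linear_sum bounded_linear_compose[OF bounded_linear_scaleR_left] bounded_linear_vec_nth)

lemma bounded_linear_coords: "bounded_linear coords"
proof -
  interpret from_coords: bounded_linear from_coords by (rule bounded_linear_from_coords)
  have "from_coords x \<noteq> 0" if "x \<noteq> 0" for x
    using that by (metis coords_from_coords from_coords.zero)
  then obtain d where d: "0 < d" "\<forall>x\<in>sphere 0 1. d \<le> norm (from_coords x)"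
    using brouwer_compactness_lemma[of "sphere 0 1" from_coords]
    by (metis compact_sphere linear_continuous_on bounded_linear_from_coords norm_zero
        mem_sphere_0 zero_neq_one)
  have bound: "d * norm x \<le> norm (from_coords x)" for x
  proof (cases "x = 0")
    case False
    then have "d \<le> norm (from_coords (x /\<^sub>R norm x))"
      using d(2) by simp
    then show ?thesis
      using False by (simp add: from_coords.scale field_simps)
  qed simp
  show ?thesis
  proof (rule bounded_linear_intro)
    show "coords (v + w) = coords v + coords w" "coords (r *\<^sub>R v) = r *\<^sub>R coords v" for v w r
      by (metis coords_from_coords from_coords_coords from_coords.add from_coords.scale)+
    show "norm (coords v) \<le> norm v * (1 / d)" for v
      using bound[of "coords v"] d(1) by (simp add: field_simps)
  qed
qed

lemma borel_measurable_from_coords [measurable]: "from_coords \<in> borel_measurable borel"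
  and borel_measurable_coords [measurable]: "coords \<in> borel_measurable borel"
  by (intro borel_measurable_continuous_onI linear_continuous_on
      bounded_linear_from_coords bounded_linear_coords)+

lemma vimage_coords: "coords -` X = from_coords ` X"
  by (auto simp: image_iff) (metis from_coords_coords)

lemma vimage_from_coords: "from_coords -` A = coords ` A"
  by (auto simp: image_iff) (metis coords_from_coords)

lemma inj_coords: "inj coords"
  by (metis from_coords_coords injI)

lemma sets_from_coords_image: "A \<in> sets borel \<Longrightarrow> from_coords ` A \<in> sets borel"
  using measurable_sets_borel[OF borel_measurable_coords] by (simp add: vimage_coords)

lemma matrix_in_coords_nth: "matrix (in_coords f) $ i $ j = representation B (f (e j)) (e i)"
proof -
  have "from_coords (axis j 1) = (\<Sum>k\<in>UNIV. if k = j then e k else 0)"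
    unfolding from_coords_def by (rule sum.cong) (auto simp: axis_def)
  then show ?thesis by (simp add: matrix_def in_coords_def coords_def)
qed

lemma det_matrix_in_coords: "det (matrix (in_coords f)) = det_wrt B f"
proof -
  define e' where "e' = inv_into UNIV e"
  have e'_e [simp]: "e' (e i) = i" for i
    using bij_e by (simp add: e'_def bij_betw_def inv_into_f_f)
  have e_e' [simp]: "b \<in> B \<Longrightarrow> e (e' b) = b" for b
    using bij_e by (simp add: e'_def bij_betw_def f_inv_into_f)
  let ?conj = "\<lambda>p b. if b \<in> B then e (p (e' b)) else b"
  have "det (matrix (in_coords f))
      = (\<Sum>p\<in>{p. p permutes (UNIV::'n set)}. of_int (sign p) * (\<Prod>i\<in>UNIV. representation B (f (e i)) (e (p i))))"
    by (subst det_transpose[symmetric]) (simp add: det_def transpose_def matrix_in_coords_nth)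
  also have "\<dots> = det_wrt B f"
    unfolding det_wrt_def
  proof (rule sum.reindex_bij_witness[where j = ?conj and i = "\<lambda>q i. e' (q (e i))"])
    fix p :: "'n \<Rightarrow> 'n" assume p: "p \<in> {p. p permutes UNIV}"
    interpret conj: permutes_bij_finite p UNIV B e e' "?conj p"
      using p bij_e by unfold_locales simp_all
    show "(\<lambda>i. e' (?conj p (e i))) = p" by simp
    show "?conj p \<in> {p. p permutes B}"
      using conj.permutes_p' by simp
    have "(\<Prod>b\<in>B. representation B (f b) (?conj p b)) = (\<Prod>i\<in>UNIV. representation B (f (e i)) (e (p i)))"
      using prod.reindex_bij_betw[OF bij_e, of "\<lambda>b. representation B (f b) (?conj p b)"] by simp
    then show "of_int (sign (?conj p)) * (\<Prod>b\<in>B. representation B (f b) (?conj p b))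
       = of_int (sign p) * (\<Prod>i\<in>UNIV. representation B (f (e i)) (e (p i)))"
      using conj.sign_p' by simp
  next
    fix q :: "'a \<Rightarrow> 'a" assume q: "q \<in> {p. p permutes B}"
    then show "?conj (\<lambda>i. e' (q (e i))) = q"
      by (auto simp: fun_eq_iff permutes_in_image permutes_not_in)
    have "bij_betw q B B" using q permutes_imp_bij by auto
    moreover have "bij_betw e' B UNIV" using bij_e by (simp add: e'_def bij_betw_inv_into)
    ultimately have "bij_betw (e' \<circ> (q \<circ> e)) UNIV UNIV"
      by (intro bij_betw_trans[OF bij_betw_trans[OF bij_e]])
    then show "(\<lambda>i. e' (q (e i))) \<in> {p. p permutes UNIV}"
      using bij_imp_permutes[of "\<lambda>i. e' (q (e i))" UNIV] by (simp add: comp_def)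
  qed
  finally show ?thesis .
qed

end

section \<open>Change of variables\<close>

lemma borel_measurable_abs_det_Jacobian:
  fixes g :: "real^'n::{finite,wellorder} \<Rightarrow> real^'n::_"
  assumes S: "S \<in> sets lebesgue"
    and der: "\<And>x. x \<in> S \<Longrightarrow> (g has_derivative g' x) (at x within S)"
  shows "(\<lambda>x. indicator S x * \<bar>det (matrix (g' x))\<bar>) \<in> borel_measurable lebesgue"
proof -
  have "(\<lambda>x. det (matrix (g' x))) \<in> borel_measurable (lebesgue_on S)"
    by (rule borel_measurable_det_Jacobian[OF S der])
  then have "(\<lambda>x. if x \<in> S then \<bar>det (matrix (g' x))\<bar> else 0) \<in> borel_measurable lebesgue"
    by (subst borel_measurable_if[OF S]) measurable
  moreover have "(\<lambda>x. if x \<in> S then \<bar>det (matrix (g' x))\<bar> else 0) = (\<lambda>x. indicator S x * \<bar>det (matrix (g' x))\<bar>)"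
    by (auto split: split_indicator)
  ultimately show ?thesis
    by simp
qed

lemma emeasure_lebesgue_differentiable_image:
  fixes g :: "real^'n::{finite,wellorder} \<Rightarrow> real^'n::_"
  assumes S: "S \<in> sets lebesgue"
    and der: "\<And>x. x \<in> S \<Longrightarrow> (g has_derivative g' x) (at x within S)"
    and inj: "inj_on g S"
  shows "emeasure lebesgue (g ` S) = (\<integral>\<^sup>+x. ennreal (indicator S x * \<bar>det (matrix (g' x))\<bar>) \<partial>lborel)"
proof (cases "(\<lambda>x. \<bar>det (matrix (g' x))\<bar>) integrable_on S")
  case True
  then have "g ` S \<in> lmeasurable" "measure lebesgue (g ` S) = integral S (\<lambda>x. \<bar>det (matrix (g' x))\<bar>)"
    using measurable_differentiable_image_eq[OF S der inj] measure_differentiable_image_eq[OF S der inj]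
    by auto
  then show ?thesis
    using nn_integral_has_integral_lebesgue[OF _ integrable_integral[OF True]]
    by (simp add: emeasure_eq_measure2)
next
  case False
  let ?F = "\<lambda>x. indicator S x * \<bar>det (matrix (g' x))\<bar>"
  have "(\<integral>\<^sup>+x. ennreal (?F x) \<partial>lborel) = \<infinity>"
  proof (rule ccontr)
    assume "(\<integral>\<^sup>+x. ennreal (?F x) \<partial>lborel) \<noteq> \<infinity>"
    then obtain r where "(\<integral>\<^sup>+x. ennreal (?F x) \<partial>lebesgue) = ennreal r" "0 \<le> r"
      by (cases "(\<integral>\<^sup>+x. ennreal (?F x) \<partial>lborel)" rule: ennreal_cases) (auto simp: nn_integral_completion)
    then have "(?F has_integral r) UNIV"
      using borel_measurable_abs_det_Jacobian[OF S der] by (subst has_integral_iff_nn_integral_lebesgue) auto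
    moreover have "?F = (\<lambda>x. if x \<in> S then \<bar>det (matrix (g' x))\<bar> else 0)"
      by (auto split: split_indicator)
    ultimately have "(\<lambda>x. \<bar>det (matrix (g' x))\<bar>) integrable_on S"
      by (auto simp: has_integral_restrict_UNIV)
    with False show False ..
  qed
  moreover have "emeasure lebesgue (g ` S) = \<infinity>"
  proof -
    have "g ` S \<in> sets lebesgue"
      using der by (intro differentiable_image_in_sets_lebesgue[OF S]) (auto simp: differentiable_on_def differentiable_def)
    moreover have "g ` S \<notin> lmeasurable"
      using False measurable_differentiable_image_eq[OF S der inj] by simp
    ultimately show ?thesis
      by (simp add: fmeasurable_def less_top[symmetric])
  qed
  ultimately show ?thesis by simp
qed

context indexed_basis
begin

lemma has_derivative_in_coords:
  assumes "(f has_derivative f') (at x within s)"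
  shows "(in_coords f has_derivative in_coords f') (at (coords x) within coords ` s)"
proof -
  have "from_coords ` coords ` s = s"
    by (simp add: image_image)
  then have "((\<lambda>v. f (from_coords v)) has_derivative (\<lambda>w. f' (from_coords w))) (at (coords x) within coords ` s)"
    using assms
    by (intro has_derivative_in_compose[OF bounded_linear_imp_has_derivative[OF bounded_linear_from_coords]])
      simp
  then show ?thesis
    unfolding in_coords_def
    by (rule has_derivative_compose[OF _ bounded_linear_imp_has_derivative[OF bounded_linear_coords]])
qed

lemma inj_on_in_coords:
  assumes "inj_on f s"
  shows "inj_on (in_coords f) (coords ` s)"
  using assms inj_coords by (auto simp: inj_on_def in_coords_def)

end

locale lebesgue_measure_in_coords = indexed_basis B e
  for B :: "'a::real_normed_vector set" and e :: "'n::finite \<Rightarrow> 'a" +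
  fixes \<mu> :: "'a measure"
  assumes lebesgue_measure: "is_lebesgue_measure \<mu>"
begin

definition scale :: ennreal where
  "scale = emeasure \<mu> (from_coords ` cbox 0 One)"

lemma sets_\<mu> [measurable_cong]: "sets \<mu> = sets borel"
  using lebesgue_measure by (simp add: is_lebesgue_measure_def)

lemma space_\<mu>: "space \<mu> = UNIV"
  using sets_eq_imp_space_eq[OF sets_\<mu>] by simp

lemma emeasure_distr_coords:
  "A \<in> sets borel \<Longrightarrow> emeasure (distr \<mu> borel coords) A = emeasure \<mu> (from_coords ` A)"
  by (subst emeasure_distr) (auto simp: space_\<mu> vimage_coords)

lemma distr_coords_eq_density_lborel: "distr \<mu> borel coords = density lborel (\<lambda>_. scale)"
proof -
  have "emeasure (distr \<mu> borel coords) ((\<lambda>x. a + x) ` A) = emeasure (distr \<mu> borel coords) A"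
    if A: "A \<in> sets borel" for a A
  proof -
    have "(\<lambda>x. a + x) ` A = (\<lambda>x. x - a) -` A"
      by (force simp: image_iff algebra_simps)
    moreover have "(\<lambda>x::real^'n. x - a) \<in> borel_measurable borel"
      by measurable
    ultimately have "(\<lambda>x. a + x) ` A \<in> sets borel"
      using measurable_sets_borel A by metis
    moreover have "from_coords ` (\<lambda>x. a + x) ` A = (\<lambda>v. from_coords a + v) ` from_coords ` A"
      by (auto simp: image_image linear_add[OF bounded_linear.linear[OF bounded_linear_from_coords]])
    ultimately show ?thesis
      using A lebesgue_measure sets_from_coords_image[OF A]
      by (simp add: emeasure_distr_coords is_lebesgue_measure_def)
  qed
  moreover have "emeasure (distr \<mu> borel coords) K < \<infinity>" if "compact K" for K
  proof -
    have "compact (from_coords ` K)"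
      using that by (intro compact_continuous_image linear_continuous_on bounded_linear_from_coords)
    then show ?thesis
      using that lebesgue_measure
      by (simp add: emeasure_distr_coords compact_imp_closed borel_closed is_lebesgue_measure_def)
  qed
  ultimately show ?thesis
    using translation_invariant_measure_eq_density_lborel[of "distr \<mu> borel coords"]
    by (simp add: emeasure_distr_coords scale_def)
qed

lemma emeasure_eq_scale_lborel:
  assumes "T \<in> sets borel"
  shows "emeasure \<mu> T = scale * emeasure lborel (from_coords -` T)"
proof -
  have T': "from_coords -` T \<in> sets borel"
    using measurable_sets_borel[OF borel_measurable_from_coords assms] .
  have "from_coords ` from_coords -` T = T"
    by (simp add: vimage_from_coords image_image)
  then have "emeasure \<mu> T = emeasure (distr \<mu> borel coords) (from_coords -` T)"
    using emeasure_distr_coords[OF T'] by simp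
  also have "\<dots> = scale * emeasure lborel (from_coords -` T)"
    using T' by (simp add: distr_coords_eq_density_lborel emeasure_density nn_integral_cmult_indicator)
  finally show ?thesis .
qed

lemma nn_integral_coords:
  assumes "h \<in> borel_measurable borel"
  shows "(\<integral>\<^sup>+y. h (coords y) \<partial>\<mu>) = scale * (\<integral>\<^sup>+x. h x \<partial>lborel)"
proof -
  have "(\<integral>\<^sup>+y. h (coords y) \<partial>\<mu>) = (\<integral>\<^sup>+x. h x \<partial>distr \<mu> borel coords)"
    using assms by (subst nn_integral_distr) auto
  then show ?thesis
    using assms by (simp add: distr_coords_eq_density_lborel nn_integral_density nn_integral_cmult)
qed

lemma AE_coords:
  assumes "AE x in lborel. P x"
  shows "AE y in \<mu>. P (coords y)"
proof -
  obtain N where N: "{x. \<not> P x} \<subseteq> N" "emeasure lborel N = 0" "N \<in> sets borel"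
    using assms by (auto elim!: AE_E)
  have "from_coords -` from_coords ` N = N"
    by (simp add: vimage_from_coords image_image)
  then have "from_coords ` N \<in> null_sets \<mu>"
    using N(2) sets_from_coords_image[OF N(3)] emeasure_eq_scale_lborel[OF sets_from_coords_image[OF N(3)]]
    by (simp add: null_sets_def sets_\<mu>)
  moreover have "{y \<in> space \<mu>. \<not> P (coords y)} \<subseteq> from_coords ` N"
  proof
    fix y assume "y \<in> {y \<in> space \<mu>. \<not> P (coords y)}"
    then have "coords y \<in> N" using N(1) by auto
    then show "y \<in> from_coords ` N" by (metis from_coords_coords image_eqI)
  qed
  ultimately show ?thesis
    by (rule AE_I')
qed

lemma outer_measure_of_from_coords_image:
  assumes X: "X \<in> sets lebesgue"
  shows "outer_measure_of \<mu> (from_coords ` X) = scale * emeasure lebesgue X"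
proof (rule antisym)
  obtain T where T: "T \<in> sets borel" "X \<subseteq> T" "emeasure lebesgue X = emeasure lborel T"
    using completion_upper[OF X] by auto
  then have "outer_measure_of \<mu> (from_coords ` X) \<le> outer_measure_of \<mu> (from_coords ` T)"
    by (intro outer_measure_of_mono image_mono)
  also have "\<dots> = emeasure \<mu> (from_coords ` T)"
    using sets_from_coords_image[OF T(1)] by (simp add: sets_\<mu>)
  also have "\<dots> = scale * emeasure lebesgue X"
    using T sets_from_coords_image[OF T(1)]
    by (simp add: emeasure_eq_scale_lborel vimage_from_coords image_image)
  finally show "outer_measure_of \<mu> (from_coords ` X) \<le> scale * emeasure lebesgue X" .
next
  show "scale * emeasure lebesgue X \<le> outer_measure_of \<mu> (from_coords ` X)"
    unfolding outer_measure_of_def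
  proof (rule INF_greatest)
    fix T assume "T \<in> {T \<in> sets \<mu>. from_coords ` X \<subseteq> T}"
    then have T: "T \<in> sets borel" "X \<subseteq> from_coords -` T"
      by (auto simp: sets_\<mu>)
    have "from_coords -` T \<in> sets borel"
      using measurable_sets_borel[OF borel_measurable_from_coords T(1)] .
    then have "emeasure lebesgue X \<le> emeasure lborel (from_coords -` T)"
      using T(2) emeasure_mono[of X "from_coords -` T" lebesgue] by simp
    then show "scale * emeasure lebesgue X \<le> emeasure \<mu> T"
      using T(1) by (simp add: emeasure_eq_scale_lborel mult_left_mono)
  qed
qed

lemma AE_eq_borel_measurable_in_coords:
  fixes F :: "real^'n \<Rightarrow> real"
  assumes "F \<in> borel_measurable lebesgue"
  shows "\<exists>G \<in> borel_measurable borel. AE y in \<mu>. F (coords y) = G y"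
proof -
  obtain F' where "F' \<in> borel_measurable borel" "AE x in lborel. F x = F' x"
    using completion_ex_borel_measurable_real[of F lborel] assms by auto
  then show ?thesis
    by (intro bexI[of _ "\<lambda>y. F' (coords y)"] AE_coords) auto
qed

lemma nn_integral_coords_lebesgue:
  fixes F :: "real^'n \<Rightarrow> real"
  assumes "F \<in> borel_measurable lebesgue"
  shows "(\<integral>\<^sup>+y. ennreal (F (coords y)) \<partial>\<mu>) = scale * (\<integral>\<^sup>+x. ennreal (F x) \<partial>lborel)"
proof -
  obtain F' where F': "F' \<in> borel_measurable borel" and ae: "AE x in lborel. F x = F' x"
    using completion_ex_borel_measurable_real[of F lborel] assms by auto
  have "(\<integral>\<^sup>+y. ennreal (F (coords y)) \<partial>\<mu>) = (\<integral>\<^sup>+y. ennreal (F' (coords y)) \<partial>\<mu>)"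
    using AE_coords[OF ae] by (intro nn_integral_cong_AE) auto
  also have "\<dots> = scale * (\<integral>\<^sup>+x. ennreal (F' x) \<partial>lborel)"
    using F' by (intro nn_integral_coords) measurable
  also have "(\<integral>\<^sup>+x. ennreal (F' x) \<partial>lborel) = (\<integral>\<^sup>+x. ennreal (F x) \<partial>lborel)"
    using ae by (intro nn_integral_cong_AE) auto
  finally show ?thesis .
qed

end

lemma change_of_variables_in_coords:
  fixes e :: "'n::{finite,wellorder} \<Rightarrow> 'a::real_normed_vector"
  assumes "lebesgue_measure_in_coords B e \<mu>"
    and s: "s \<in> sets borel" and inj: "inj_on f s"
    and der: "\<And>x. x \<in> s \<Longrightarrow> (f has_derivative f' x) (at x within s)"
  shows "(\<exists>g \<in> borel_measurable borel. AE x in \<mu>. x \<in> s \<longrightarrow> \<bar>det_wrt B (f' x)\<bar> = g x)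
    \<and> outer_measure_of \<mu> (f ` s) = (\<integral>\<^sup>+ x. indicator s x * ennreal \<bar>det_wrt B (f' x)\<bar> \<partial>\<mu>)"
proof -
  interpret lebesgue_measure_in_coords B e \<mu> by fact
  define S where "S = coords ` s"
  have S: "S \<in> sets lebesgue"
    using measurable_sets_borel[OF borel_measurable_from_coords s] by (simp add: S_def vimage_from_coords)
  have der_S: "(in_coords f has_derivative in_coords (f' (from_coords v))) (at v within S)" if "v \<in> S" for v
    using that has_derivative_in_coords[OF der] by (auto simp: S_def)
  have inj_S: "inj_on (in_coords f) S"
    using inj_on_in_coords[OF inj] by (simp add: S_def)
  define F where "F v = indicator S v * \<bar>det (matrix (in_coords (f' (from_coords v))))\<bar>" for v
  have F_meas: "F \<in> borel_measurable lebesgue"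
    unfolding F_def[abs_def] by (rule borel_measurable_abs_det_Jacobian[OF S der_S])
  have F_coords: "F (coords x) = indicator s x * \<bar>det_wrt B (f' x)\<bar>" for x
    by (simp add: F_def S_def indicator_def inj_image_mem_iff[OF inj_coords] det_matrix_in_coords)
  have "in_coords f ` S \<in> sets lebesgue"
    using der_S by (intro differentiable_image_in_sets_lebesgue[OF S])
      (auto simp: differentiable_on_def differentiable_def)
  moreover have "from_coords ` in_coords f ` S = f ` s"
    by (simp add: S_def in_coords_def image_image)
  ultimately have "outer_measure_of \<mu> (f ` s) = scale * emeasure lebesgue (in_coords f ` S)"
    using outer_measure_of_from_coords_image by metis
  also have "\<dots> = scale * (\<integral>\<^sup>+v. ennreal (F v) \<partial>lborel)"
    unfolding F_def by (simp add: emeasure_lebesgue_differentiable_image[OF S der_S inj_S])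
  also have "\<dots> = (\<integral>\<^sup>+x. ennreal (F (coords x)) \<partial>\<mu>)"
    by (rule nn_integral_coords_lebesgue[OF F_meas, symmetric])
  also have "\<dots> = (\<integral>\<^sup>+x. indicator s x * ennreal \<bar>det_wrt B (f' x)\<bar> \<partial>\<mu>)"
    by (simp add: F_coords ennreal_mult' ennreal_indicator)
  finally show ?thesis
    using AE_eq_borel_measurable_in_coords[OF F_meas]
    by (auto simp: F_coords elim!: AE_mp bexI[rotated])
qed

lemma image_eq_if_trivial_space:
  assumes "(UNIV :: 'a set) = {c}"
  shows "(f :: 'a \<Rightarrow> 'a) ` s = s"
  using assms by (metis UNIV_I empty_is_image singletonD subset_singletonD top_greatest)

lemma det_wrt_empty [simp]: "det_wrt {} f = 1"
  by (simp add: det_wrt_def)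

theorem mainTheorem3:
  fixes \<mu> :: "'a::real_normed_vector measure"
    and s :: "'a set" and f :: "'a \<Rightarrow> 'a" and f' :: "'a \<Rightarrow> 'a \<Rightarrow> 'a"
  assumes "fin_dim_space TYPE('a)"
    and "is_lebesgue_measure \<mu>"
    and "s \<in> sets borel"
    and "inj_on f s"
    and "\<And>x. bounded_linear (f' x)"
    and "\<And>x. x \<in> s \<Longrightarrow> (f has_derivative f' x) (at x within s)"
  shows "(\<exists>g \<in> borel_measurable borel. AE x in \<mu>. x \<in> s \<longrightarrow> \<bar>lin_det (f' x)\<bar> = g x)
    \<and> outer_measure_of \<mu> (f ` s) = (\<integral>\<^sup>+ x. indicator s x * ennreal \<bar>lin_det (f' x)\<bar> \<partial>\<mu>)"
proof (cases "chosen_basis = ({} :: 'a set)")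
  case False
  have "finite (chosen_basis :: 'a set)"
    by (rule finite_chosen_basis[OF assms(1)])
  with False obtain e :: "'a basis_index \<Rightarrow> 'a" where "bij_betw e UNIV chosen_basis"
    using finite_same_card_bij[of "UNIV :: 'a basis_index set" chosen_basis]
    by (auto simp: card_basis_index card_gt_0_iff Suc_leI)
  then have "lebesgue_measure_in_coords chosen_basis e \<mu>"
    using chosen_basis assms(2) by unfold_locales auto
  from change_of_variables_in_coords[OF this assms(3,4,6)] show ?thesis
    by (simp add: lin_det_eq_det_wrt)
next
  case True
  then have "(UNIV :: 'a set) = {0}"
    by (metis chosen_basis(2) real_vector.span_empty)
  moreover have "sets \<mu> = sets borel"
    using assms(2) by (simp add: is_lebesgue_measure_def)
  ultimately show ?thesis
    using assms(3) by (auto simp: True lin_det_eq_det_wrt image_eq_if_trivial_space intro!: bexI[of _ "\<lambda>_. 1"])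
qed

end
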